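(* Let $K$ be a nonempty finite set and $X=\Delta(K)$. Let $u,v$ be probabilities on $X$ with finite supports $U$ and $V$ respectively. Then $$d_*(u,v)=\sup_{f\in D_1}|u(f)-v(f)|=\min_{(\alpha,\beta)\in\mathcal M_4(u,v)}\sum_{(x,y)\in U\times V}\|\alpha(x,y)\,x-\beta(x,y)\,y\|_1,$$ and the minimum is attained.
   Context: $X=\Delta(K)\subset\mathbb R^K$ with $\|p\|_1=\sum_k|p^k|$, and $u(f)=\sum_{x\in U}u(x)f(x)$. $D_1=\{f\in\mathcal C(X):\ \forall x,y\in X,\ \forall a,b\ge0,\ af(x)-bf(y)\le\|ax-by\|_1\}$. $\mathcal M_4(u,v)$ is the set of pairs $(\alpha,\beta)\in(\mathbb R_+^{U\times V})^2$ such that: - $\sum_{y'\in V}\alpha(x,y')=u(x)$ for all $x\in U$, and - $\sum_{x'\in U}\beta(x',y)=v(y)$ for all $y\in V$. *)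

theory Defs
  imports "HOL-Analysis.Analysis"
begin

text \<open>Points of R^K are functions 'k \<Rightarrow> real, with 'k a finite (hence nonempty) type;
  the topology is the product topology (= Euclidean topology).\<close>

definition DeltaK :: "('k::finite \<Rightarrow> real) set" where
  "DeltaK = {p. (\<forall>k. 0 \<le> p k) \<and> (\<Sum>k\<in>UNIV. p k) = 1}"

definition norm1 :: "('k::finite \<Rightarrow> real) \<Rightarrow> real" where
  "norm1 p = (\<Sum>k\<in>UNIV. \<bar>p k\<bar>)"

definition supp :: "(('k \<Rightarrow> real) \<Rightarrow> real) \<Rightarrow> ('k \<Rightarrow> real) set" where
  "supp u = {x. u x \<noteq> 0}"

definition fin_prob :: "(('k::finite \<Rightarrow> real) \<Rightarrow> real) \<Rightarrow> bool" where
  "fin_prob u \<longleftrightarrow> finite (supp u) \<and> supp u \<subseteq> DeltaK \<and> (\<forall>x. 0 \<le> u x)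
      \<and> (\<Sum>x\<in>supp u. u x) = 1"

definition integ :: "(('k \<Rightarrow> real) \<Rightarrow> real) \<Rightarrow> (('k \<Rightarrow> real) \<Rightarrow> real) \<Rightarrow> real" where
  "integ u f = (\<Sum>x\<in>supp u. u x * f x)"

definition D1 :: "(('k::finite \<Rightarrow> real) \<Rightarrow> real) set" where
  "D1 = {f. continuous_on DeltaK f \<and>
     (\<forall>x\<in>DeltaK. \<forall>y\<in>DeltaK. \<forall>a b. 0 \<le> a \<longrightarrow> 0 \<le> b \<longrightarrow>
        a * f x - b * f y \<le> norm1 (\<lambda>k. a * x k - b * y k))}"

definition d_star :: "(('k::finite \<Rightarrow> real) \<Rightarrow> real) \<Rightarrow> (('k \<Rightarrow> real) \<Rightarrow> real) \<Rightarrow> real" where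
  "d_star u v = (SUP f\<in>D1. \<bar>integ u f - integ v f\<bar>)"

text \<open>Elements of (R_+^{U\<times>V})^2, represented as functions vanishing outside U \<times> V.\<close>
definition M4 :: "(('k::finite \<Rightarrow> real) \<Rightarrow> real) \<Rightarrow> (('k \<Rightarrow> real) \<Rightarrow> real) \<Rightarrow>
    ((('k \<Rightarrow> real) \<Rightarrow> ('k \<Rightarrow> real) \<Rightarrow> real) \<times> (('k \<Rightarrow> real) \<Rightarrow> ('k \<Rightarrow> real) \<Rightarrow> real)) set" where
  "M4 u v = {(\<alpha>, \<beta>).
      (\<forall>x y. (x \<in> supp u \<and> y \<in> supp v) \<longrightarrow> 0 \<le> \<alpha> x y \<and> 0 \<le> \<beta> x y) \<and>
      (\<forall>x y. \<not> (x \<in> supp u \<and> y \<in> supp v) \<longrightarrow> \<alpha> x y = 0 \<and> \<beta> x y = 0) \<and>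
      (\<forall>x\<in>supp u. (\<Sum>y'\<in>supp v. \<alpha> x y') = u x) \<and>
      (\<forall>y\<in>supp v. (\<Sum>x'\<in>supp u. \<beta> x' y) = v y)}"

definition cost :: "(('k::finite \<Rightarrow> real) \<Rightarrow> real) \<Rightarrow> (('k \<Rightarrow> real) \<Rightarrow> real) \<Rightarrow>
    (('k \<Rightarrow> real) \<Rightarrow> ('k \<Rightarrow> real) \<Rightarrow> real) \<Rightarrow> (('k \<Rightarrow> real) \<Rightarrow> ('k \<Rightarrow> real) \<Rightarrow> real) \<Rightarrow> real" where
  "cost u v \<alpha> \<beta> = (\<Sum>(x, y)\<in>supp u \<times> supp v. norm1 (\<lambda>k. \<alpha> x y * x k - \<beta> x y * y k))"

end

theory Submission
  imports Defs
begin

text \<open>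
  Weak duality (|u(f) - v(f)| \<le> cost(\<alpha>, \<beta>)) follows term by term from the definition of D1,
  using the marginal conditions of M4.  For strong duality we first prove von Neumann's minimax
  theorem for finite matrix games, by induction on the number of pure strategies.  We then play
  the finite game in which the minimiser chooses a pair of routings \<sigma> : U \<rightarrow> V, \<tau> : V \<rightarrow> U (whose
  mixtures are elements of M4) and the maximiser chooses a sign pattern s(x, y, k) \<in> {-1, 1}
  (whose pairing with a transport pair is at most its cost, with equality for the right pattern).
  The minimiser's optimal mixture is a transport pair (\<alpha>, \<beta>); the maximiser's optimal mixture is a
  coefficient field \<lambda> whose max-min function F(z) = max_x min_y \<lambda>(x, y) \<cdot> z lies in D1 and
  satisfies cost(\<alpha>, \<beta>) \<le> u(F) - v(F).
\<close>

section \<open>Mixed strategies\<close>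

definition prob_vectors :: "'a set \<Rightarrow> ('a \<Rightarrow> real) set" where
  "prob_vectors A = {p. (\<forall>a. 0 \<le> p a) \<and> (\<forall>a. a \<notin> A \<longrightarrow> p a = 0) \<and> sum p A = 1}"

lemma point_mass_prob_vectors:
  "finite A \<Longrightarrow> a \<in> A \<Longrightarrow> (\<lambda>x. if x = a then 1 else 0) \<in> prob_vectors A"
  unfolding prob_vectors_def by auto

lemma prob_vectors_mix:
  assumes "p \<in> prob_vectors A" "p' \<in> prob_vectors A" "0 \<le> t" "t \<le> 1"
  shows "(\<lambda>a. t * p' a + (1 - t) * p a) \<in> prob_vectors A"
  using assms unfolding prob_vectors_def by (auto simp: sum.distrib simp flip: sum_distrib_left)

lemma prob_vectors_mono:
  "p \<in> prob_vectors B' \<Longrightarrow> B' \<subseteq> B \<Longrightarrow> finite B \<Longrightarrow> p \<in> prob_vectors B"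
  unfolding prob_vectors_def by (auto, subst sum.mono_neutral_right[of B B']) auto

lemma prob_vectors_average_const: "q \<in> prob_vectors B \<Longrightarrow> (\<Sum>b\<in>B. q b * c) = c"
  unfolding prob_vectors_def by (simp flip: sum_distrib_right)

text \<open>On a finite set, the probability vectors form a compact subset of the function space
  (a closed subset of a product of compact intervals); this yields optimal mixed strategies.\<close>
lemma compact_prob_vectors:
  assumes "finite A" shows "compact (prob_vectors A)"
proof -
  define S where "S = (\<lambda>i. if i \<in> A then {0..1::real} else {0})"
  have eq: "prob_vectors A = PiE UNIV S \<inter> {p. sum p A = 1}"
  proof (intro set_eqI iffI)
    fix p assume p: "p \<in> prob_vectors A"
    have "p i \<le> 1" if "i \<in> A" for i
    proof -
      have "p i \<le> sum p A" using p that assms by (intro member_le_sum) (auto simp: prob_vectors_def)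
      then show ?thesis using p by (simp add: prob_vectors_def)
    qed
    then show "p \<in> PiE UNIV S \<inter> {p. sum p A = 1}" using p by (auto simp: prob_vectors_def S_def)
  next
    fix p assume "p \<in> PiE UNIV S \<inter> {p. sum p A = 1}"
    then show "p \<in> prob_vectors A"
      by (auto simp: prob_vectors_def PiE_iff S_def split: if_splits)
  qed
  have "compactin (product_topology (\<lambda>i. euclidean) UNIV) (PiE UNIV S)"
    by (subst compactin_PiE) (auto simp: S_def)
  then have "compact (PiE UNIV S)" by (simp add: euclidean_product_topology)
  moreover have "closed {p::'a \<Rightarrow> real. sum p A = 1}"
    by (intro closed_Collect_eq continuous_on_sum continuous_on_product_coordinates continuous_on_const)
  ultimately show ?thesis unfolding eq by (rule compact_Int_closed)
qed

section \<open>Von Neumann's minimax theorem for finite matrix games\<close>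

text \<open>In the game with payoff matrix M, where the row player (pure strategies A) pays M a b to the
  column player (pure strategies B): the worst loss of the mixed row strategy p.\<close>
definition worst_loss :: "'a set \<Rightarrow> 'b set \<Rightarrow> ('a \<Rightarrow> 'b \<Rightarrow> real) \<Rightarrow> ('a \<Rightarrow> real) \<Rightarrow> real" where
  "worst_loss A B M p = Max ((\<lambda>b. \<Sum>a\<in>A. p a * M a b) ` B)"

definition saddle :: "'a set \<Rightarrow> 'b set \<Rightarrow> ('a \<Rightarrow> 'b \<Rightarrow> real) \<Rightarrow> bool" where
  "saddle A B M \<longleftrightarrow> (\<exists>p\<in>prob_vectors A. \<exists>q\<in>prob_vectors B. \<forall>a\<in>A. \<forall>b\<in>B.
      (\<Sum>a'\<in>A. p a' * M a' b) \<le> (\<Sum>b'\<in>B. q b' * M a b'))"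

lemma saddle_transpose: "saddle A B M \<Longrightarrow> saddle B A (\<lambda>b a. - M a b)"
  unfolding saddle_def by (auto simp: sum_negf)

lemma worst_loss_ge: "finite B \<Longrightarrow> b \<in> B \<Longrightarrow> (\<Sum>a\<in>A. p a * M a b) \<le> worst_loss A B M p"
  unfolding worst_loss_def by (rule Max_ge) auto

lemma worst_loss_attained:
  assumes "finite B" "B \<noteq> {}"
  shows "\<exists>b\<in>B. worst_loss A B M p = (\<Sum>a\<in>A. p a * M a b)"
proof -
  have "worst_loss A B M p \<in> (\<lambda>b. \<Sum>a\<in>A. p a * M a b) ` B"
    unfolding worst_loss_def using assms by (intro Max_in) auto
  then show ?thesis by auto
qed

lemma worst_loss_less_iff:
  "finite B \<Longrightarrow> B \<noteq> {} \<Longrightarrow> worst_loss A B M p < c \<longleftrightarrow> (\<forall>b\<in>B. (\<Sum>a\<in>A. p a * M a b) < c)"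
  unfolding worst_loss_def by (subst Max_less_iff) auto

lemma continuous_on_Max_family:
  fixes g :: "'b \<Rightarrow> 'c::topological_space \<Rightarrow> real"
  assumes "finite B" "B \<noteq> {}" "\<And>b. b \<in> B \<Longrightarrow> continuous_on S (g b)"
  shows "continuous_on S (\<lambda>p. Max ((\<lambda>b. g b p) ` B))"
  using assms
proof (induction B rule: finite_ne_induct)
  case (insert x F)
  have "continuous_on S (\<lambda>p. max (g x p) (Max ((\<lambda>b. g b p) ` F)))"
    using insert by (intro continuous_on_max) auto
  then show ?case using insert by simp
qed simp

lemma continuous_on_Min_family:
  fixes g :: "'b \<Rightarrow> 'c::topological_space \<Rightarrow> real"
  assumes "finite B" "B \<noteq> {}" "\<And>b. b \<in> B \<Longrightarrow> continuous_on S (g b)"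
  shows "continuous_on S (\<lambda>p. Min ((\<lambda>b. g b p) ` B))"
  using assms
proof (induction B rule: finite_ne_induct)
  case (insert x F)
  have "continuous_on S (\<lambda>p. min (g x p) (Min ((\<lambda>b. g b p) ` F)))"
    using insert by (intro continuous_on_min) auto
  then show ?case using insert by simp
qed simp

lemma continuous_on_coordinate: "continuous_on S (\<lambda>p. p a)"
  by (rule continuous_on_product_then_coordinatewise[OF continuous_on_id])

text \<open>By compactness, each player has a mixed strategy minimising its worst loss.\<close>
lemma optimal_strategy_exists:
  assumes "finite A" "A \<noteq> {}" "finite B" "B \<noteq> {}"
  shows "\<exists>p0\<in>prob_vectors A. \<forall>p\<in>prob_vectors A. worst_loss A B M p0 \<le> worst_loss A B M p"
proof (rule continuous_attains_inf)
  show "prob_vectors A \<noteq> {}" using assms point_mass_prob_vectors by fastforce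
  show "continuous_on (prob_vectors A) (worst_loss A B M)"
    unfolding worst_loss_def[abs_def] using assms(3,4)
    by (intro continuous_on_Max_family continuous_on_sum continuous_on_mult_right continuous_on_coordinate)
qed (use assms compact_prob_vectors in auto)

text \<open>Real-number core of the improvement step: if x stays below g and is strictly below g at b0,
  while y is strictly below g away from b0, then a small move from x towards y is strictly
  below g everywhere.\<close>
lemma small_mix_below:
  fixes x y :: "'b \<Rightarrow> real"
  assumes "b0 \<in> B" "x b0 < g" "\<And>b. b \<in> B \<Longrightarrow> x b \<le> g" "\<And>b. b \<in> B - {b0} \<Longrightarrow> y b < g"
  shows "\<exists>t. 0 < t \<and> t \<le> 1 \<and> (\<forall>b\<in>B. t * y b + (1 - t) * x b < g)"
proof -
  define d where "d = g - x b0"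
  define D where "D = \<bar>y b0 - x b0\<bar>"
  define t where "t = d / (d + D)"
  have d: "d > 0" and D: "D \<ge> 0" using assms(2) by (auto simp: d_def D_def)
  then have t: "0 < t" "t \<le> 1" by (auto simp: t_def)
  have "t * D < d"
  proof -
    have "t * D = d * D / (d + D)" by (simp add: t_def)
    also have "\<dots> < d" using d D by (simp add: divide_less_eq)
    finally show ?thesis .
  qed
  then have at_b0: "t * y b0 + (1 - t) * x b0 < g"
    using mult_left_mono[OF abs_ge_self[of "y b0 - x b0"] less_imp_le[OF t(1)]]
    by (simp add: d_def D_def algebra_simps)
  show ?thesis
  proof (intro exI conjI ballI)
    fix b assume b: "b \<in> B"
    show "t * y b + (1 - t) * x b < g"
    proof (cases "b = b0")
      case False
      then have "t * y b + (1 - t) * x b < t * g + (1 - t) * g"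
        using t assms(3,4) b by (intro add_less_le_mono mult_strict_left_mono mult_left_mono) auto
      then show ?thesis by (simp add: algebra_simps)
    qed (use at_b0 in simp)
  qed (use t in auto)
qed

text \<open>Otherwise, mixing it slightly with an optimal
  strategy of a smaller game would push the worst loss below g.\<close>
lemma optimal_strategy_equalizes:
  fixes M :: "'a \<Rightarrow> 'b \<Rightarrow> real"
  assumes fin: "finite A" "A \<noteq> {}" "finite B" "B \<noteq> {}"
    and smaller: "\<And>b. b \<in> B \<Longrightarrow> B - {b} \<noteq> {} \<Longrightarrow> saddle A (B - {b}) M"
    and p0: "p0 \<in> prob_vectors A"
    and opt: "\<And>p. p \<in> prob_vectors A \<Longrightarrow> worst_loss A B M p0 \<le> worst_loss A B M p"
    and no_guarantee: "\<And>q. q \<in> prob_vectors B \<Longrightarrow> \<exists>a\<in>A. (\<Sum>b\<in>B. q b * M a b) < worst_loss A B M p0"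
  shows "\<forall>b\<in>B. (\<Sum>a\<in>A. p0 a * M a b) = worst_loss A B M p0"
proof (rule ccontr)
  let ?g = "worst_loss A B M p0"
  let ?loss = "\<lambda>p b. \<Sum>a\<in>A. p a * M a b"
  assume "\<not> ?thesis"
  then obtain b0 where b0: "b0 \<in> B" "?loss p0 b0 < ?g"
    using worst_loss_ge[OF fin(3), where A=A and p=p0 and M=M] order_le_neq_trans by blast
  have "B - {b0} \<noteq> {}"
  proof
    assume "B - {b0} = {}"
    then have "B = {b0}" using b0 by auto
    then show False using b0(2) by (simp add: worst_loss_def)
  qed
  then obtain p' q' where p': "p' \<in> prob_vectors A" and q': "q' \<in> prob_vectors (B - {b0})"
    and sad: "\<And>a b. a \<in> A \<Longrightarrow> b \<in> B - {b0} \<Longrightarrow> ?loss p' b \<le> (\<Sum>b'\<in>B - {b0}. q' b' * M a b')"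
    using smaller[OF b0(1)] unfolding saddle_def by blast
  obtain a1 where a1: "a1 \<in> A" "(\<Sum>b\<in>B. q' b * M a1 b) < ?g"
    using no_guarantee[OF prob_vectors_mono[OF q' _ fin(3)]] by blast
  have "(\<Sum>b\<in>B. q' b * M a1 b) = (\<Sum>b\<in>B - {b0}. q' b * M a1 b)"
    using q' fin b0 by (intro sum.mono_neutral_right) (auto simp: prob_vectors_def)
  then have "\<And>b. b \<in> B - {b0} \<Longrightarrow> ?loss p' b < ?g"
    using sad[OF a1(1)] a1(2) by fastforce
  then obtain t where t: "0 < t" "t \<le> 1" and below: "\<forall>b\<in>B. t * ?loss p' b + (1 - t) * ?loss p0 b < ?g"
    using small_mix_below[of b0 B "?loss p0" ?g "?loss p'"] b0 worst_loss_ge[OF fin(3)] by blast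
  define pt where "pt = (\<lambda>a. t * p' a + (1 - t) * p0 a)"
  have loss_pt: "?loss pt b = t * ?loss p' b + (1 - t) * ?loss p0 b" for b
    by (simp add: pt_def sum_distrib_left sum.distrib[symmetric] algebra_simps)
  have "worst_loss A B M pt < ?g"
    unfolding worst_loss_less_iff[OF fin(3,4)] loss_pt using below .
  moreover have "pt \<in> prob_vectors A" unfolding pt_def using p0 p' t by (intro prob_vectors_mix) auto
  ultimately show False using opt by fastforce
qed

lemma saddle_if_values_meet:
  assumes "finite A" "finite B" "p0 \<in> prob_vectors A" "q0 \<in> prob_vectors B"
    and meet: "worst_loss A B M p0 \<le> - worst_loss B A (\<lambda>b a. - M a b) q0"
  shows "saddle A B M"
  unfolding saddle_def
proof (intro bexI ballI)
  fix a b assume a: "a \<in> A" and b: "b \<in> B"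
  have "(\<Sum>b'\<in>B. q0 b' * - M a b') \<le> worst_loss B A (\<lambda>b a. - M a b) q0"
    by (rule worst_loss_ge[OF assms(1) a])
  then show "(\<Sum>a'\<in>A. p0 a' * M a' b) \<le> (\<Sum>b'\<in>B. q0 b' * M a b')"
    using worst_loss_ge[OF assms(2) b, where A=A and p=p0 and M=M] meet by (simp add: sum_negf)
qed (use assms in auto)

lemma optimal_strategy_equalizes_if_gap:
  fixes M :: "'a \<Rightarrow> 'b \<Rightarrow> real"
  assumes fin: "finite A" "A \<noteq> {}" "finite B" "B \<noteq> {}"
    and smaller: "\<And>b. b \<in> B \<Longrightarrow> B - {b} \<noteq> {} \<Longrightarrow> saddle A (B - {b}) M"
    and p0: "p0 \<in> prob_vectors A"
    and opt: "\<And>p. p \<in> prob_vectors A \<Longrightarrow> worst_loss A B M p0 \<le> worst_loss A B M p"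
    and opt': "\<And>q. q \<in> prob_vectors B \<Longrightarrow>
        worst_loss B A (\<lambda>b a. - M a b) q0 \<le> worst_loss B A (\<lambda>b a. - M a b) q"
    and gap: "- worst_loss B A (\<lambda>b a. - M a b) q0 < worst_loss A B M p0"
  shows "\<forall>b\<in>B. (\<Sum>a\<in>A. p0 a * M a b) = worst_loss A B M p0"
proof (rule optimal_strategy_equalizes[OF fin smaller p0 opt])
  fix q assume q: "q \<in> prob_vectors B"
  obtain a where a: "a \<in> A" "worst_loss B A (\<lambda>b a. - M a b) q = (\<Sum>b\<in>B. q b * - M a b)"
    using worst_loss_attained[OF fin(1,2)] by blast
  then have "(\<Sum>b\<in>B. q b * M a b) < worst_loss A B M p0"
    using opt'[OF q] gap by (simp add: sum_negf)
  then show "\<exists>a\<in>A. (\<Sum>b\<in>B. q b * M a b) < worst_loss A B M p0" using a(1) by blast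
qed

text \<open>By induction on the total number of pure strategies: take optimal strategies
  p0 and q0 of both players; if their values meet they form a saddle point, and otherwise both
  equalize against all opponent strategies, which forces the values to coincide after all.\<close>
theorem minimax:
  fixes M :: "'a \<Rightarrow> 'b \<Rightarrow> real"
  assumes "finite A" "A \<noteq> {}" "finite B" "B \<noteq> {}"
  shows "saddle A B M"
  using assms
proof (induction "card A + card B" arbitrary: A B M rule: less_induct)
  case (less A B M)
  note fin = less.prems
  define M' where "M' = (\<lambda>b a. - M a b)"
  obtain p0 where p0: "p0 \<in> prob_vectors A"
    and opt: "\<And>p. p \<in> prob_vectors A \<Longrightarrow> worst_loss A B M p0 \<le> worst_loss A B M p"
    using optimal_strategy_exists[OF fin] by blast
  obtain q0 where q0: "q0 \<in> prob_vectors B"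
    and opt': "\<And>q. q \<in> prob_vectors B \<Longrightarrow> worst_loss B A M' q0 \<le> worst_loss B A M' q"
    using optimal_strategy_exists[OF fin(3,4,1,2)] by blast
  show ?case
  proof (cases "worst_loss A B M p0 \<le> - worst_loss B A M' q0")
    case True
    then show ?thesis using saddle_if_values_meet fin p0 q0 unfolding M'_def by blast
  next
    case False
    then have gap: "- worst_loss B A M' q0 < worst_loss A B M p0" by simp
    have transpose_back: "(\<lambda>a b. - M' b a) = M" by (simp add: M'_def)
    have gap': "- worst_loss A B M p0 < worst_loss B A M' q0" using gap by linarith
    have "\<forall>b\<in>B. (\<Sum>a\<in>A. p0 a * M a b) = worst_loss A B M p0"
    proof (rule optimal_strategy_equalizes_if_gap[OF fin _ p0 opt opt'[unfolded M'_def] gap[unfolded M'_def]])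
      show "saddle A (B - {b}) M" if "b \<in> B" "B - {b} \<noteq> {}" for b
        using less.hyps[of A "B - {b}"] fin that by (simp add: card_gt_0_iff)
    qed
    then have "(\<Sum>b\<in>B. q0 b * (\<Sum>a\<in>A. p0 a * M a b)) = worst_loss A B M p0"
      using prob_vectors_average_const[OF q0] by simp
    moreover have "\<forall>a\<in>A. (\<Sum>b\<in>B. q0 b * M' b a) = worst_loss B A M' q0"
    proof (rule optimal_strategy_equalizes_if_gap[where M=M', unfolded transpose_back,
          OF fin(3,4,1,2) _ q0 opt' opt gap'])
      show "saddle B (A - {a}) M'" if "a \<in> A" "A - {a} \<noteq> {}" for a
        using less.hyps[of "A - {a}" B] fin that unfolding M'_def
        by (intro saddle_transpose) (simp add: card_gt_0_iff)
    qed
    then have "(\<Sum>a\<in>A. p0 a * (\<Sum>b\<in>B. q0 b * M' b a)) = worst_loss B A M' q0"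
      using prob_vectors_average_const[OF p0] by simp
    moreover have "(\<Sum>a\<in>A. p0 a * (\<Sum>b\<in>B. q0 b * M' b a)) = - (\<Sum>b\<in>B. q0 b * (\<Sum>a\<in>A. p0 a * M a b))"
      unfolding M'_def by (simp add: sum_distrib_left sum_negf algebra_simps sum.swap[of _ A B])
    ultimately show ?thesis using gap by simp
  qed
qed

section \<open>Weak duality\<close>

lemma fin_prob_D:
  assumes "fin_prob u"
  shows "finite (supp u)" "supp u \<noteq> {}" "supp u \<subseteq> DeltaK" "\<And>x. 0 \<le> u x"
  using assms unfolding fin_prob_def by auto

text \<open>The defining inequality of D1 holds in absolute value, by symmetry in (a, x) and (b, y).\<close>
lemma D1_abs_bound:
  assumes "f \<in> D1" "x \<in> DeltaK" "y \<in> DeltaK" "0 \<le> a" "0 \<le> b"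
  shows "\<bar>a * f x - b * f y\<bar> \<le> norm1 (\<lambda>k. a * x k - b * y k)"
proof -
  have "a * f x - b * f y \<le> norm1 (\<lambda>k. a * x k - b * y k)"
    and "b * f y - a * f x \<le> norm1 (\<lambda>k. b * y k - a * x k)"
    using assms unfolding D1_def by auto
  moreover have "norm1 (\<lambda>k. b * y k - a * x k) = norm1 (\<lambda>k. a * x k - b * y k)"
    unfolding norm1_def by (simp add: abs_minus_commute)
  ultimately show ?thesis by (simp add: abs_le_iff)
qed

text \<open>Weak duality: for f in D1 and (\<alpha>, \<beta>) in M4, the marginal conditions give
  u(f) - v(f) = \<Sum> \<alpha>(x,y) f(x) - \<beta>(x,y) f(y), and each term is bounded by the cost of (x, y).\<close>
lemma weak_duality:
  assumes u: "fin_prob u" and v: "fin_prob v" and f: "f \<in> D1" and ab: "(\<alpha>, \<beta>) \<in> M4 u v"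
  shows "\<bar>integ u f - integ v f\<bar> \<le> cost u v \<alpha> \<beta>"
proof -
  let ?U = "supp u" and ?V = "supp v"
  have M: "\<And>x y. x \<in> ?U \<Longrightarrow> y \<in> ?V \<Longrightarrow> 0 \<le> \<alpha> x y \<and> 0 \<le> \<beta> x y"
    "\<And>x. x \<in> ?U \<Longrightarrow> (\<Sum>y\<in>?V. \<alpha> x y) = u x"
    "\<And>y. y \<in> ?V \<Longrightarrow> (\<Sum>x\<in>?U. \<beta> x y) = v y"
    using ab unfolding M4_def by auto
  have "integ u f - integ v f = (\<Sum>x\<in>?U. \<Sum>y\<in>?V. \<alpha> x y * f x) - (\<Sum>y\<in>?V. \<Sum>x\<in>?U. \<beta> x y * f y)"
    unfolding integ_def by (simp add: M(2,3) flip: sum_distrib_right)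
  also have "\<dots> = (\<Sum>x\<in>?U. \<Sum>y\<in>?V. \<alpha> x y * f x - \<beta> x y * f y)"
    by (simp add: sum_subtractf sum.swap[of _ ?V])
  finally have "\<bar>integ u f - integ v f\<bar> \<le> (\<Sum>x\<in>?U. \<bar>\<Sum>y\<in>?V. \<alpha> x y * f x - \<beta> x y * f y\<bar>)"
    by (simp only: sum_abs)
  also have "\<dots> \<le> (\<Sum>x\<in>?U. \<Sum>y\<in>?V. \<bar>\<alpha> x y * f x - \<beta> x y * f y\<bar>)"
    by (intro sum_mono sum_abs)
  also have "\<dots> \<le> (\<Sum>x\<in>?U. \<Sum>y\<in>?V. norm1 (\<lambda>k. \<alpha> x y * x k - \<beta> x y * y k))"
    using fin_prob_D(3)[OF u] fin_prob_D(3)[OF v] M(1)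
    by (intro sum_mono D1_abs_bound[OF f]) auto
  also have "\<dots> = cost u v \<alpha> \<beta>"
    unfolding cost_def by (simp add: sum.cartesian_product)
  finally show ?thesis .
qed

section \<open>Test functions of max-min type\<close>

definition lin :: "('k::finite \<Rightarrow> real) \<Rightarrow> ('k \<Rightarrow> real) \<Rightarrow> real" where
  "lin c z = (\<Sum>k\<in>UNIV. c k * z k)"

lemma lin_le_norm1:
  assumes "\<And>k. \<bar>c k\<bar> \<le> 1"
  shows "lin c p \<le> lin c q + norm1 (\<lambda>k. p k - q k)"
proof -
  have term_le: "c k * (p k - q k) \<le> \<bar>p k - q k\<bar>" for k
  proof -
    have "c k * (p k - q k) \<le> \<bar>c k\<bar> * \<bar>p k - q k\<bar>" by (metis abs_ge_self abs_mult)
    also have "\<dots> \<le> \<bar>p k - q k\<bar>" using assms mult_right_mono[of "\<bar>c k\<bar>" 1] by simp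
    finally show ?thesis .
  qed
  have "lin c p - lin c q = (\<Sum>k\<in>UNIV. c k * (p k - q k))"
    unfolding lin_def by (simp add: sum_subtractf algebra_simps)
  also have "\<dots> \<le> norm1 (\<lambda>k. p k - q k)"
    unfolding norm1_def by (intro sum_mono term_le)
  finally show ?thesis by simp
qed

lemma lin_scale: "lin c (\<lambda>k. a * z k) = a * lin c z"
  unfolding lin_def by (simp add: sum_distrib_left algebra_simps)

lemma continuous_on_lin: "continuous_on S (lin c)"
  unfolding lin_def[abs_def] by (intro continuous_on_sum continuous_on_mult_left continuous_on_coordinate)

text \<open>It is the test function produced by strong duality.\<close>
definition maxmin_fun :: "'a set \<Rightarrow> 'b set \<Rightarrow> ('a \<Rightarrow> 'b \<Rightarrow> 'k::finite \<Rightarrow> real) \<Rightarrow> ('k \<Rightarrow> real) \<Rightarrow> real" where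
  "maxmin_fun U V lam z = Max ((\<lambda>x. Min ((\<lambda>y. lin (lam x y) z) ` V)) ` U)"

lemma Max_shift_le:
  assumes "finite I" "I \<noteq> {}" "\<And>i. i \<in> I \<Longrightarrow> g i \<le> h i + L"
  shows "Max (g ` I) \<le> Max (h ` I) + (L::real)"
proof -
  have "g i \<le> Max (h ` I) + L" if "i \<in> I" for i
    using assms(3)[OF that] Max_ge[OF finite_imageI[OF assms(1)] imageI[OF that, of h]] by linarith
  then show ?thesis using assms by (subst Max_le_iff) auto
qed

lemma Min_shift_le:
  assumes "finite I" "I \<noteq> {}" "\<And>i. i \<in> I \<Longrightarrow> g i \<le> h i + L"
  shows "Min (g ` I) \<le> Min (h ` I) + (L::real)"
proof -
  have "Min (h ` I) \<in> h ` I" using assms by (intro Min_in) auto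
  then obtain j where j: "j \<in> I" "Min (h ` I) = h j" by auto
  then have "Min (g ` I) \<le> g j" using assms by auto
  then show ?thesis using assms(3)[OF j(1)] j(2) by simp
qed

lemma maxmin_fun_scale:
  assumes "finite U" "U \<noteq> {}" "finite V" "V \<noteq> {}" "0 \<le> a"
  shows "maxmin_fun U V lam (\<lambda>k. a * z k) = a * maxmin_fun U V lam z"
proof -
  have m: "mono ((*) a)" using assms(5) by (simp add: mono_def mult_left_mono)
  have "Min ((\<lambda>y. lin (lam x y) (\<lambda>k. a * z k)) ` V) = a * Min ((\<lambda>y. lin (lam x y) z) ` V)" for x
    using mono_Min_commute[OF m, of "(\<lambda>y. lin (lam x y) z) ` V"] assms
    by (simp add: lin_scale image_image)
  then show ?thesis unfolding maxmin_fun_def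
    using mono_Max_commute[OF m, of "(\<lambda>x. Min ((\<lambda>y. lin (lam x y) z) ` V)) ` U"] assms
    by (simp add: image_image)
qed

text \<open>With coefficients in [-1, 1], the max-min function belongs to D1: it is continuous,
  1-Lipschitz for the 1-norm and positively homogeneous, which together give the D1 inequality.\<close>
lemma maxmin_fun_D1:
  assumes fin: "finite U" "U \<noteq> {}" "finite V" "V \<noteq> {}"
    and lam: "\<And>x y k. x \<in> U \<Longrightarrow> y \<in> V \<Longrightarrow> \<bar>lam x y k\<bar> \<le> 1"
  shows "maxmin_fun U V lam \<in> D1"
proof -
  let ?F = "maxmin_fun U V lam"
  have "continuous_on DeltaK ?F"
    unfolding maxmin_fun_def[abs_def] using fin
    by (intro continuous_on_Max_family continuous_on_Min_family continuous_on_lin)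
  moreover have lip: "?F p \<le> ?F q + norm1 (\<lambda>k. p k - q k)" for p q
    unfolding maxmin_fun_def using assms by (intro Max_shift_le Min_shift_le lin_le_norm1) auto
  moreover have "a * ?F x - b * ?F y \<le> norm1 (\<lambda>k. a * x k - b * y k)"
    if "0 \<le> a" "0 \<le> b" for a b x y
    using lip[of "\<lambda>k. a * x k" "\<lambda>k. b * y k"]
    by (simp add: maxmin_fun_scale[OF fin that(1)] maxmin_fun_scale[OF fin that(2)])
  ultimately show ?thesis unfolding D1_def by auto
qed

section \<open>Strong duality\<close>

text \<open>Routings: \<sigma> sends all the mass u(x) to the single target \<sigma>(x), and \<tau> collects all of v(y)
  from the single source \<tau>(y).  Mixtures of routings produce the transport pairs used below.\<close>
definition send :: "(('k \<Rightarrow> real) \<Rightarrow> real) \<Rightarrow> (('k \<Rightarrow> real) \<Rightarrow> real) \<Rightarrow> (('k \<Rightarrow> real) \<Rightarrow> ('k \<Rightarrow> real))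
    \<Rightarrow> ('k \<Rightarrow> real) \<Rightarrow> ('k \<Rightarrow> real) \<Rightarrow> real" where
  "send u v \<sigma> x y = (if x \<in> supp u \<and> y \<in> supp v \<and> \<sigma> x = y then u x else 0)"

definition receive :: "(('k \<Rightarrow> real) \<Rightarrow> real) \<Rightarrow> (('k \<Rightarrow> real) \<Rightarrow> real) \<Rightarrow> (('k \<Rightarrow> real) \<Rightarrow> ('k \<Rightarrow> real))
    \<Rightarrow> ('k \<Rightarrow> real) \<Rightarrow> ('k \<Rightarrow> real) \<Rightarrow> real" where
  "receive u v \<tau> x y = (if x \<in> supp u \<and> y \<in> supp v \<and> \<tau> y = x then v y else 0)"

lemma routing_in_M4:
  assumes "fin_prob u" "fin_prob v" "\<sigma> \<in> supp u \<rightarrow> supp v" "\<tau> \<in> supp v \<rightarrow> supp u"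
  shows "(send u v \<sigma>, receive u v \<tau>) \<in> M4 u v"
  using assms fin_prob_D[OF assms(1)] fin_prob_D[OF assms(2)]
  unfolding M4_def send_def receive_def by (auto simp: Pi_iff)

lemma M4_mixture:
  assumes "finite R" "p \<in> prob_vectors R" "\<And>r. r \<in> R \<Longrightarrow> (\<alpha> r, \<beta> r) \<in> M4 u v"
  shows "(\<lambda>x y. \<Sum>r\<in>R. p r * \<alpha> r x y, \<lambda>x y. \<Sum>r\<in>R. p r * \<beta> r x y) \<in> M4 u v"
proof -
  have p: "\<And>r. 0 \<le> p r" "sum p R = 1" using assms(2) by (auto simp: prob_vectors_def)
  have "(\<Sum>y'\<in>supp v. \<Sum>r\<in>R. p r * \<alpha> r x y') = u x" if "x \<in> supp u" for x
  proof -
    have "(\<Sum>y'\<in>supp v. \<Sum>r\<in>R. p r * \<alpha> r x y') = (\<Sum>r\<in>R. p r * (\<Sum>y'\<in>supp v. \<alpha> r x y'))"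
      by (simp add: sum.swap[of _ "supp v"] sum_distrib_left)
    also have "\<dots> = (\<Sum>r\<in>R. p r * u x)" using assms(3) that by (simp add: M4_def)
    finally show ?thesis using p(2) by (simp flip: sum_distrib_right)
  qed
  moreover have "(\<Sum>x'\<in>supp u. \<Sum>r\<in>R. p r * \<beta> r x' y) = v y" if "y \<in> supp v" for y
  proof -
    have "(\<Sum>x'\<in>supp u. \<Sum>r\<in>R. p r * \<beta> r x' y) = (\<Sum>r\<in>R. p r * (\<Sum>x'\<in>supp u. \<beta> r x' y))"
      by (simp add: sum.swap[of _ "supp u"] sum_distrib_left)
    also have "\<dots> = (\<Sum>r\<in>R. p r * v y)" using assms(3) that by (simp add: M4_def)
    finally show ?thesis using p(2) by (simp flip: sum_distrib_right)
  qed
  ultimately show ?thesis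
    using assms(3) p(1) unfolding M4_def by (auto intro!: sum_nonneg)
qed

text \<open>It is bilinear, bounded by the cost when |\<lambda>| \<le> 1, and equal to it for the sign pattern of
  \<alpha>(x,y) x - \<beta>(x,y) y.\<close>
definition pairing :: "('k::finite \<Rightarrow> real) set \<Rightarrow> ('k \<Rightarrow> real) set \<Rightarrow> (('k \<Rightarrow> real) \<Rightarrow> ('k \<Rightarrow> real) \<Rightarrow> real)
    \<Rightarrow> (('k \<Rightarrow> real) \<Rightarrow> ('k \<Rightarrow> real) \<Rightarrow> real) \<Rightarrow> (('k \<Rightarrow> real) \<Rightarrow> ('k \<Rightarrow> real) \<Rightarrow> 'k \<Rightarrow> real) \<Rightarrow> real" where
  "pairing U V \<alpha> \<beta> lam = (\<Sum>x\<in>U. \<Sum>y\<in>V. \<alpha> x y * lin (lam x y) x - \<beta> x y * lin (lam x y) y)"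

lemma pairing_mix_pairs:
  "(\<Sum>r\<in>R. p r * pairing U V (\<alpha> r) (\<beta> r) lam)
     = pairing U V (\<lambda>x y. \<Sum>r\<in>R. p r * \<alpha> r x y) (\<lambda>x y. \<Sum>r\<in>R. p r * \<beta> r x y) lam"
  unfolding pairing_def
  by (simp add: sum_distrib_left sum_distrib_right sum_subtractf sum.swap[of _ R] algebra_simps)

lemma pairing_mix_fields:
  "(\<Sum>s\<in>S. q s * pairing U V \<alpha> \<beta> (lam s)) = pairing U V \<alpha> \<beta> (\<lambda>x y k. \<Sum>s\<in>S. q s * lam s x y k)"
  unfolding pairing_def lin_def
  by (simp add: sum_distrib_left sum_distrib_right sum_subtractf sum.swap[of _ S] algebra_simps)

definition sign_field :: "('k \<Rightarrow> real) set \<Rightarrow> ('k \<Rightarrow> real) set \<Rightarrow> (('k \<Rightarrow> real) \<Rightarrow> ('k \<Rightarrow> real) \<Rightarrow> real)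
    \<Rightarrow> (('k \<Rightarrow> real) \<Rightarrow> ('k \<Rightarrow> real) \<Rightarrow> real) \<Rightarrow> (('k \<Rightarrow> real) \<Rightarrow> ('k \<Rightarrow> real) \<Rightarrow> 'k \<Rightarrow> real)" where
  "sign_field U V \<alpha> \<beta> = (\<lambda>x\<in>U. \<lambda>y\<in>V. \<lambda>k. if 0 \<le> \<alpha> x y * x k - \<beta> x y * y k then 1 else -1)"

lemma cost_eq_pairing_sign_field:
  "cost u v \<alpha> \<beta> = pairing (supp u) (supp v) \<alpha> \<beta> (sign_field (supp u) (supp v) \<alpha> \<beta>)"
proof -
  let ?s = "sign_field (supp u) (supp v) \<alpha> \<beta>"
  have "norm1 (\<lambda>k. \<alpha> x y * x k - \<beta> x y * y k) = \<alpha> x y * lin (?s x y) x - \<beta> x y * lin (?s x y) y"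
    if "x \<in> supp u" "y \<in> supp v" for x y
  proof -
    have "norm1 (\<lambda>k. \<alpha> x y * x k - \<beta> x y * y k) = (\<Sum>k\<in>UNIV. ?s x y k * (\<alpha> x y * x k - \<beta> x y * y k))"
      unfolding norm1_def sign_field_def using that by (intro sum.cong) auto
    then show ?thesis unfolding lin_def by (simp add: sum_distrib_left sum_subtractf algebra_simps)
  qed
  then show ?thesis
    unfolding cost_def pairing_def sum.cartesian_product by (intro sum.cong refl) auto
qed

lemma average_abs_le_one:
  assumes "q \<in> prob_vectors S" "\<And>s. s \<in> S \<Longrightarrow> \<bar>c s\<bar> \<le> (1::real)"
  shows "\<bar>\<Sum>s\<in>S. q s * c s\<bar> \<le> 1"
proof -
  have q: "\<And>s. 0 \<le> q s" "sum q S = 1" using assms(1) by (auto simp: prob_vectors_def)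
  have "\<bar>\<Sum>s\<in>S. q s * c s\<bar> \<le> (\<Sum>s\<in>S. q s * \<bar>c s\<bar>)"
    using sum_abs[of "\<lambda>s. q s * c s" S] q(1) by (simp add: abs_mult)
  also have "\<dots> \<le> (\<Sum>s\<in>S. q s)" using assms(2) q(1) by (intro sum_mono) (simp add: mult_left_le)
  finally show ?thesis using q(2) by simp
qed

lemma pairing_routing:
  assumes "finite (supp u)" "finite (supp v)"
    and "\<And>x. x \<in> supp u \<Longrightarrow> \<sigma> x \<in> supp v" "\<And>y. y \<in> supp v \<Longrightarrow> \<tau> y \<in> supp u"
  shows "pairing (supp u) (supp v) (send u v \<sigma>) (receive u v \<tau>) lam
    = (\<Sum>x\<in>supp u. u x * lin (lam x (\<sigma> x)) x) - (\<Sum>y\<in>supp v. v y * lin (lam (\<tau> y) y) y)"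
proof -
  have "(\<Sum>y\<in>supp v. send u v \<sigma> x y * lin (lam x y) x) = u x * lin (lam x (\<sigma> x)) x"
    if "x \<in> supp u" for x
    using that assms by (simp add: send_def if_distrib[of "\<lambda>a. a * _"] sum.delta' cong: if_cong)
  moreover have "(\<Sum>x\<in>supp u. receive u v \<tau> x y * lin (lam x y) y) = v y * lin (lam (\<tau> y) y) y"
    if "y \<in> supp v" for y
    using that assms by (simp add: receive_def if_distrib[of "\<lambda>a. a * _"] sum.delta' cong: if_cong)
  ultimately show ?thesis
    unfolding pairing_def by (simp add: sum_subtractf sum.swap[of _ "supp v"])
qed

lemma choose_minimisers:
  fixes g :: "'a \<Rightarrow> 'b \<Rightarrow> 'c::linorder"
  assumes "finite V" "V \<noteq> {}"
  shows "\<exists>\<sigma>. \<forall>x. \<sigma> x \<in> V \<and> g x (\<sigma> x) = Min (g x ` V)"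
proof -
  have "\<exists>y. y \<in> V \<and> g x y = Min (g x ` V)" for x
    using Min_in[of "g x ` V"] assms by (metis finite_imageI image_iff image_is_empty)
  then show ?thesis by metis
qed

lemma choose_maximisers:
  fixes g :: "'a \<Rightarrow> 'b \<Rightarrow> 'c::linorder"
  assumes "finite V" "V \<noteq> {}"
  shows "\<exists>\<sigma>. \<forall>x. \<sigma> x \<in> V \<and> g x (\<sigma> x) = Max (g x ` V)"
proof -
  have "\<exists>y. y \<in> V \<and> g x y = Max (g x ` V)" for x
    using Max_in[of "g x ` V"] assms by (metis finite_imageI image_iff image_is_empty)
  then show ?thesis by metis
qed

text \<open>For any field \<lambda> with coefficients in [-1, 1], the best routing (each x sends to a minimising
  y, each y receives from a maximising x) pairs with \<lambda> to at most u(F) - v(F), where F is the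
  max-min test function of \<lambda>.\<close>
lemma best_routing:
  fixes lam :: "('k::finite \<Rightarrow> real) \<Rightarrow> ('k \<Rightarrow> real) \<Rightarrow> 'k \<Rightarrow> real"
  assumes u: "fin_prob u" and v: "fin_prob v"
  defines "F \<equiv> maxmin_fun (supp u) (supp v) lam"
  shows "\<exists>\<sigma>\<in>supp u \<rightarrow>\<^sub>E supp v. \<exists>\<tau>\<in>supp v \<rightarrow>\<^sub>E supp u.
    pairing (supp u) (supp v) (send u v \<sigma>) (receive u v \<tau>) lam \<le> integ u F - integ v F"
proof -
  let ?U = "supp u" and ?V = "supp v"
  note U = fin_prob_D[OF u] and V = fin_prob_D[OF v]
  obtain \<sigma> where \<sigma>: "\<And>x. \<sigma> x \<in> ?V \<and> lin (lam x (\<sigma> x)) x = Min ((\<lambda>y. lin (lam x y) x) ` ?V)"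
    using choose_minimisers[OF V(1,2), of "\<lambda>x y. lin (lam x y) x"] by blast
  obtain \<tau> where \<tau>: "\<And>y. \<tau> y \<in> ?U \<and> lin (lam (\<tau> y) y) y = Max ((\<lambda>x. lin (lam x y) y) ` ?U)"
    using choose_maximisers[OF U(1,2), of "\<lambda>y x. lin (lam x y) y"] by blast
  have gain_u: "(\<Sum>x\<in>?U. u x * lin (lam x (\<sigma> x)) x) \<le> integ u F"
    unfolding integ_def
  proof (intro sum_mono mult_left_mono)
    fix x assume x: "x \<in> ?U"
    show "lin (lam x (\<sigma> x)) x \<le> F x"
      unfolding F_def maxmin_fun_def using \<sigma> x U(1) by (intro Max.coboundedI) auto
  qed (use U(4) in auto)
  have pay_v: "integ v F \<le> (\<Sum>y\<in>?V. v y * lin (lam (\<tau> y) y) y)"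
    unfolding integ_def
  proof (intro sum_mono mult_left_mono)
    fix y assume y: "y \<in> ?V"
    have "F y \<le> Max ((\<lambda>x. lin (lam x y) y) ` ?U) + 0"
      unfolding F_def maxmin_fun_def using U(1,2) V(1) y by (intro Max_shift_le) auto
    then show "F y \<le> lin (lam (\<tau> y) y) y" using \<tau> y by simp
  qed (use V(4) in auto)
  define \<sigma>' where "\<sigma>' = restrict \<sigma> ?U"
  define \<tau>' where "\<tau>' = restrict \<tau> ?V"
  have "send u v \<sigma>' = send u v \<sigma>" "receive u v \<tau>' = receive u v \<tau>"
    by (auto simp: \<sigma>'_def \<tau>'_def send_def receive_def fun_eq_iff)
  moreover have "pairing ?U ?V (send u v \<sigma>) (receive u v \<tau>) lam
      = (\<Sum>x\<in>?U. u x * lin (lam x (\<sigma> x)) x) - (\<Sum>y\<in>?V. v y * lin (lam (\<tau> y) y) y)"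
    by (rule pairing_routing[OF U(1) V(1)]) (use \<sigma> \<tau> in blast)+
  ultimately have "pairing ?U ?V (send u v \<sigma>') (receive u v \<tau>') lam
      = (\<Sum>x\<in>?U. u x * lin (lam x (\<sigma> x)) x) - (\<Sum>y\<in>?V. v y * lin (lam (\<tau> y) y) y)"
    by simp
  moreover have "\<sigma>' \<in> ?U \<rightarrow>\<^sub>E ?V" "\<tau>' \<in> ?V \<rightarrow>\<^sub>E ?U" using \<sigma> \<tau> by (auto simp: \<sigma>'_def \<tau>'_def)
  ultimately show ?thesis using gain_u pay_v
    by (intro bexI[of _ \<sigma>'] bexI[of _ \<tau>']) simp_all
qed

text \<open>In the finite game where the minimiser picks a pair of routings and the
  maximiser a sign pattern on U \<times> V \<times> K, with payoff their pairing, an optimal mixture of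
  routings is a transport pair (\<alpha>, \<beta>) whose cost is at most the value of the game, and the
  optimal mixture of sign patterns yields a field \<lambda> whose max-min function attains that value.\<close>
lemma strong_duality:
  fixes u v :: "('k::finite \<Rightarrow> real) \<Rightarrow> real"
  assumes u: "fin_prob u" and v: "fin_prob v"
  shows "\<exists>\<alpha> \<beta> f. (\<alpha>, \<beta>) \<in> M4 u v \<and> f \<in> D1 \<and> cost u v \<alpha> \<beta> \<le> integ u f - integ v f"
proof -
  let ?U = "supp u" and ?V = "supp v"
  note U = fin_prob_D[OF u] and V = fin_prob_D[OF v]
  define Routings where "Routings = (?U \<rightarrow>\<^sub>E ?V) \<times> (?V \<rightarrow>\<^sub>E ?U)"
  define Signs :: "(('k \<Rightarrow> real) \<Rightarrow> ('k \<Rightarrow> real) \<Rightarrow> 'k \<Rightarrow> real) set"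
    where "Signs = ?U \<rightarrow>\<^sub>E ?V \<rightarrow>\<^sub>E UNIV \<rightarrow>\<^sub>E {-1, 1}"
  define game where "game r s = pairing ?U ?V (send u v (fst r)) (receive u v (snd r)) s" for r s
  have "finite Routings" "Routings \<noteq> {}" "finite Signs" "Signs \<noteq> {}"
    using U(1,2) V(1,2) by (auto simp: Routings_def Signs_def finite_PiE PiE_eq_empty_iff)
  then obtain p q where p: "p \<in> prob_vectors Routings" and q: "q \<in> prob_vectors Signs"
    and sad: "\<And>r s. r \<in> Routings \<Longrightarrow> s \<in> Signs \<Longrightarrow>
        (\<Sum>r'\<in>Routings. p r' * game r' s) \<le> (\<Sum>s'\<in>Signs. q s' * game r s')"
    using minimax[of Routings Signs game] unfolding saddle_def by blast
  define \<alpha> where "\<alpha> x y = (\<Sum>r\<in>Routings. p r * send u v (fst r) x y)" for x y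
  define \<beta> where "\<beta> x y = (\<Sum>r\<in>Routings. p r * receive u v (snd r) x y)" for x y
  define lam where "lam x y k = (\<Sum>s\<in>Signs. q s * s x y k)" for x y k
  have M4: "(\<alpha>, \<beta>) \<in> M4 u v"
    unfolding \<alpha>_def[abs_def] \<beta>_def[abs_def] using \<open>finite Routings\<close> p
    by (intro M4_mixture routing_in_M4 u v) (auto simp: Routings_def)
  have "\<bar>lam x y k\<bar> \<le> 1" if "x \<in> ?U" "y \<in> ?V" for x y k
  proof -
    have "s x y k \<in> {-1, 1}" if "s \<in> Signs" for s
      using that \<open>x \<in> ?U\<close> \<open>y \<in> ?V\<close> by (auto simp: Signs_def)
    then have "\<bar>s x y k\<bar> \<le> 1" if "s \<in> Signs" for s using that by fastforce
    then show ?thesis unfolding lam_def using q by (intro average_abs_le_one) auto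
  qed
  then have F: "maxmin_fun ?U ?V lam \<in> D1" using U(1,2) V(1,2) by (intro maxmin_fun_D1)
  obtain \<sigma> \<tau> where r0: "(\<sigma>, \<tau>) \<in> Routings" and best:
    "game (\<sigma>, \<tau>) lam \<le> integ u (maxmin_fun ?U ?V lam) - integ v (maxmin_fun ?U ?V lam)"
    using best_routing[OF u v, of lam] unfolding Routings_def game_def by auto
  have "sign_field ?U ?V \<alpha> \<beta> \<in> Signs" by (auto simp: Signs_def sign_field_def split: if_splits)
  then have "cost u v \<alpha> \<beta> \<le> (\<Sum>s\<in>Signs. q s * game (\<sigma>, \<tau>) s)"
    using sad[OF r0] unfolding cost_eq_pairing_sign_field game_def pairing_mix_pairs \<alpha>_def \<beta>_def
    by blast
  also have "\<dots> = game (\<sigma>, \<tau>) lam"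
    unfolding game_def pairing_mix_fields lam_def ..
  finally show ?thesis using M4 F best by fastforce
qed

text \<open>Strong duality provides (\<alpha>, \<beta>) and f with cost(\<alpha>, \<beta>) \<le> u(f) - v(f); weak duality bounds every
  |u(g) - v(g)| and every cost from the other side, so all these quantities coincide.\<close>
theorem theorem2:
  fixes u v :: "('k::finite \<Rightarrow> real) \<Rightarrow> real"
  assumes "fin_prob u" and "fin_prob v"
  shows "bdd_above ((\<lambda>f. \<bar>integ u f - integ v f\<bar>) ` D1) \<and>
    (\<exists>(\<alpha>, \<beta>)\<in>M4 u v. d_star u v = cost u v \<alpha> \<beta> \<and>
        (\<forall>(\<alpha>', \<beta>')\<in>M4 u v. cost u v \<alpha> \<beta> \<le> cost u v \<alpha>' \<beta>'))"
proof -
  obtain \<alpha> \<beta> f where ab: "(\<alpha>, \<beta>) \<in> M4 u v" and f: "f \<in> D1"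
    and c: "cost u v \<alpha> \<beta> \<le> integ u f - integ v f"
    using strong_duality[OF assms] by blast
  have bound: "\<And>g. g \<in> D1 \<Longrightarrow> \<bar>integ u g - integ v g\<bar> \<le> cost u v \<alpha> \<beta>"
    using weak_duality[OF assms _ ab] by blast
  then have bdd: "bdd_above ((\<lambda>f. \<bar>integ u f - integ v f\<bar>) ` D1)" by (intro bdd_aboveI) auto
  have "d_star u v \<le> cost u v \<alpha> \<beta>"
    unfolding d_star_def using bound f by (intro cSUP_least) auto
  moreover have "\<bar>integ u f - integ v f\<bar> \<le> d_star u v"
    unfolding d_star_def using f bdd by (rule cSUP_upper)
  ultimately have "d_star u v = cost u v \<alpha> \<beta>" using c by linarith
  moreover have "cost u v \<alpha> \<beta> \<le> cost u v \<alpha>' \<beta>'" if "(\<alpha>', \<beta>') \<in> M4 u v" for \<alpha>' \<beta>'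
    using weak_duality[OF assms f that] c by linarith
  ultimately show ?thesis using bdd ab by blast
qed

end
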